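(* Let $a_0,a_1,\ldots$ be a sequence of integers satisfying a linear recurrence $a_{n+k}=c_{k-1}a_{n+k-1}+\cdots+c_0a_n$ for all sufficiently large $n$, with characteristic polynomial $\chi(x)=x^k-c_{k-1}x^{k-1}-\cdots-c_0$ whose complex roots $r_1,\ldots,r_k$ are pairwise distinct, and let $\beta_1,\ldots,\beta_k\in\mathbb{C}$ be such that $a_n=\sum_{i=1}^k\beta_i r_i^n$ for all sufficiently large $n$. Suppose $\chi(x)=\chi_1(x)\chi_2(x)\cdots\chi_j(x)$ where each $\chi_i(x)$ is a polynomial irreducible over $\mathbb{Q}$. If $r_{i_1},\ldots,r_{i_d}$ are the roots of $\chi_1(x)$, then either $\beta_{i_1}=\cdots=\beta_{i_d}=0$, or all of $\beta_{i_1},\ldots,\beta_{i_d}$ are nonzero.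
   Context: It is a standard fact that when the roots of $\chi$ are distinct, such coefficients $\beta_1,\dots,\beta_k$ exist. *)

theory Defs
  imports Complex_Main "HOL-Computational_Algebra.Computational_Algebra"
begin

definition char_poly :: "nat \<Rightarrow> (nat \<Rightarrow> rat) \<Rightarrow> rat poly" where
  "char_poly k c = monom 1 k - (\<Sum>i<k. monom (c i) i)"

end

theory Submission
  imports Defs "HOL-Computational_Algebra.Field_as_Ring" "Subresultants.More_Homomorphisms"
begin

(* Extend w^n \<mapsto> (\<chi>(x) - \<chi>(w)) / (x - w) linearly to sequences and apply it to the
   tail a(N + n). By the closed form this yields a rational polynomial P with
   P(r_m) = \<beta>_m r_m^N \<chi>'(r_m), and \<chi>'(r_m) \<noteq> 0 because the roots are simple. If \<beta>_l = 0
   for a root r_l of \<chi>_1, then P vanishes at r_l, hence at every root r_i of the irreducible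
   \<chi>_1, so \<beta>_i r_i^N = 0; and r_i = 0 is excluded, since then \<chi>_1 would be a multiple of x
   and r_l = r_i. *)

(* For s n = w ^ n this is the quotient (X(x) - X(w)) / (x - w). *)
definition diff_quot_poly :: "'a::comm_semiring_1 poly \<Rightarrow> (nat \<Rightarrow> 'a) \<Rightarrow> 'a poly" where
  "diff_quot_poly X s = (\<Sum>t\<le>degree X. \<Sum>m<t. monom (coeff X t * s (t - Suc m)) m)"

lemma poly_diff_quot_poly:
  "poly (diff_quot_poly X s) z = (\<Sum>t\<le>degree X. \<Sum>m<t. coeff X t * s (t - Suc m) * z ^ m)"
  by (simp add: diff_quot_poly_def poly_sum poly_monom)

lemma poly_diff_quot_poly_linear:
  "poly (diff_quot_poly X (\<lambda>n. \<Sum>j\<in>J. \<beta> j * s j n)) z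
     = (\<Sum>j\<in>J. \<beta> j * poly (diff_quot_poly X (s j)) z)"
  by (simp add: poly_diff_quot_poly sum_distrib_left sum_distrib_right mult_ac sum.swap[of _ J])

lemma poly_diff_quot_poly_geometric:
  fixes X :: "'a::comm_ring_1 poly"
  shows "(z - w) * poly (diff_quot_poly X (\<lambda>n. w ^ n)) z = poly X z - poly X w"
proof -
  have "(z - w) * poly (diff_quot_poly X (\<lambda>n. w ^ n)) z
      = (\<Sum>t\<le>degree X. coeff X t * ((z - w) * (\<Sum>m<t. w ^ (t - Suc m) * z ^ m)))"
    by (simp add: poly_diff_quot_poly sum_distrib_left mult_ac)
  also have "\<dots> = (\<Sum>t\<le>degree X. coeff X t * (z ^ t - w ^ t))"
    by (simp add: power_diff_sumr2)
  also have "\<dots> = poly X z - poly X w"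
    by (simp add: poly_altdef algebra_simps sum_subtractf)
  finally show ?thesis .
qed

lemma poly_pderiv_altdef:
  fixes X :: "'a::idom poly"
  shows "poly (pderiv X) w = (\<Sum>t\<le>degree X. of_nat t * coeff X t * w ^ (t - 1))"
proof (cases "degree X")
  case 0
  then obtain c where "X = [:c:]" by (rule degree_eq_zeroE)
  then show ?thesis by (simp add: pderiv_pCons)
next
  case (Suc n)
  then have "degree (pderiv X) \<le> n"
    using degree_pderiv_le[of X] by simp
  then have "poly (pderiv X) w = poly (\<Sum>i\<le>n. monom (coeff (pderiv X) i) i) w"
    by (simp only: poly_as_sum_of_monoms')
  also have "\<dots> = (\<Sum>i\<le>n. of_nat (Suc i) * coeff X (Suc i) * w ^ i)"
    by (simp add: poly_sum poly_monom coeff_pderiv)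
  finally show ?thesis
    unfolding Suc sum.atMost_Suc_shift by simp
qed

lemma poly_diff_quot_poly_geometric_same:
  fixes X :: "'a::idom poly"
  shows "poly (diff_quot_poly X (\<lambda>n. w ^ n)) w = poly (pderiv X) w"
proof -
  have "w ^ (t - Suc m) * w ^ m = w ^ (t - 1)" if "m < t" for t m
    using that by (simp flip: power_add)
  then show ?thesis
    by (auto simp: poly_pderiv_altdef poly_diff_quot_poly mult.assoc intro!: sum.cong)
qed

lemma poly_diff_quot_poly_at_root:
  fixes X :: "'a::idom poly"
  assumes "finite J" and "inj_on r J" and roots: "\<And>j. j \<in> J \<Longrightarrow> poly X (r j) = 0"
    and "l \<in> J"
  shows "poly (diff_quot_poly X (\<lambda>n. \<Sum>j\<in>J. \<beta> j * r j ^ n)) (r l) = \<beta> l * poly (pderiv X) (r l)"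
proof -
  have vanish: "poly (diff_quot_poly X (\<lambda>n. r j ^ n)) (r l) = 0" if "j \<in> J - {l}" for j
  proof -
    have "(r l - r j) * poly (diff_quot_poly X (\<lambda>n. r j ^ n)) (r l) = 0"
      using poly_diff_quot_poly_geometric roots that \<open>l \<in> J\<close> by (metis DiffD1 diff_self)
    moreover have "r l \<noteq> r j"
      using that \<open>l \<in> J\<close> \<open>inj_on r J\<close> by (auto dest: inj_onD)
    ultimately show ?thesis by simp
  qed
  have "poly (diff_quot_poly X (\<lambda>n. \<Sum>j\<in>J. \<beta> j * r j ^ n)) (r l)
      = (\<Sum>j\<in>J. \<beta> j * poly (diff_quot_poly X (\<lambda>n. r j ^ n)) (r l))"
    by (rule poly_diff_quot_poly_linear)
  also have "\<dots> = \<beta> l * poly (diff_quot_poly X (\<lambda>n. r l ^ n)) (r l)"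
    using vanish assms(1,4) by (simp add: sum.remove)
  also have "\<dots> = \<beta> l * poly (pderiv X) (r l)"
    by (simp add: poly_diff_quot_poly_geometric_same)
  finally show ?thesis .
qed

interpretation of_rat_poly_hom: map_poly_idom_hom of_rat ..

lemma map_poly_of_rat_diff_quot_poly:
  "map_poly of_rat (diff_quot_poly X s) = diff_quot_poly (map_poly of_rat X) (\<lambda>n. of_rat (s n))"
  by (simp add: diff_quot_poly_def of_rat_poly_hom.hom_sum of_rat_mult)

lemma poly_pderiv_neq_0_if_card_roots_eq_degree:
  fixes p :: "'a::idom poly"
  assumes "p \<noteq> 0" and card: "card {z. poly p z = 0} = degree p" and "poly p a = 0"
  shows "poly (pderiv p) a \<noteq> 0"
proof
  assume "poly (pderiv p) a = 0"
  from \<open>poly p a = 0\<close> obtain q1 where q1: "p = [:-a, 1:] * q1"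
    by (auto simp: poly_eq_0_iff_dvd elim: dvdE)
  have "pderiv p = q1 + [:-a, 1:] * pderiv q1"
    unfolding q1 pderiv_mult by (simp add: pderiv_pCons algebra_simps)
  with \<open>poly (pderiv p) a = 0\<close> have "poly q1 a = 0"
    by simp
  then obtain q where q: "q1 = [:-a, 1:] * q"
    by (auto simp: poly_eq_0_iff_dvd elim: dvdE)
  have p_eq: "p = [:-a, 1:] ^ 2 * q"
    by (simp only: q1 q power2_eq_square mult.assoc)
  with \<open>p \<noteq> 0\<close> have "q \<noteq> 0"
    by auto
  with p_eq have deg: "degree p = degree q + 2"
    by (simp add: degree_mult_eq degree_power_eq)
  have "{z. poly p z = 0} \<subseteq> insert a {z. poly q z = 0}"
    by (auto simp: p_eq)
  then have "card {z. poly p z = 0} \<le> card (insert a {z. poly q z = 0})"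
    by (intro card_mono) (simp_all add: poly_roots_finite[OF \<open>q \<noteq> 0\<close>])
  also have "\<dots> \<le> Suc (card {z. poly q z = 0})"
    by (simp add: card_insert_if poly_roots_finite[OF \<open>q \<noteq> 0\<close>])
  also have "\<dots> \<le> Suc (degree q)"
    using card_poly_roots_bound[OF \<open>q \<noteq> 0\<close>] by simp
  finally show False
    using card deg by simp
qed

lemma poly_of_rat_eq_0_if_irreducible_common_root:
  fixes p q :: "rat poly" and z w :: "'a::field_char_0"
  assumes "irreducible p"
    and "poly (map_poly of_rat p) z = 0" and "poly (map_poly of_rat q) z = 0"
    and "poly (map_poly of_rat p) w = 0"
  shows "poly (map_poly of_rat q) w = 0"
proof -
  have "p dvd q"
  proof (rule ccontr)
    assume "\<not> p dvd q"
    with \<open>irreducible p\<close> have "coprime p q"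
      by (meson coprimeI dvd_trans irreducible_altdef)
    then obtain u v where "u * p + v * q = 1"
      using bezout_coefficients_fst_snd[of p q] by (auto simp: coprime_iff_gcd_eq_1)
    then have "map_poly of_rat u * map_poly of_rat p + map_poly of_rat v * map_poly of_rat q
        = (1 :: 'a poly)"
      by (metis of_rat_poly_hom.hom_add of_rat_poly_hom.hom_mult of_rat_poly_hom.hom_one)
    from arg_cong[OF this, of "\<lambda>x. poly x z"] assms(2,3) show False
      by simp
  qed
  then have "map_poly of_rat p dvd (map_poly of_rat q :: 'a poly)"
    by (rule of_rat_poly_hom.hom_dvd)
  with assms(4) show ?thesis
    by (auto simp: poly_eq_0_iff_dvd intro: dvd_trans)
qed

lemma degree_char_poly: "degree (char_poly k c) = k"
proof (cases "k = 0")
  case True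
  then show ?thesis by (simp add: char_poly_def)
next
  case False
  have "degree (- (\<Sum>i<k. monom (c i) i)) < degree (monom (1::rat) k)"
    using False by (auto simp: degree_monom_eq intro!: degree_sum_less le_less_trans[OF degree_monom_le])
  from degree_add_eq_left[OF this] show ?thesis
    by (simp add: char_poly_def degree_monom_eq)
qed

lemma power_sum_coeff_eq_0_if_conjugate_coeff_eq_0:
  fixes s :: "nat \<Rightarrow> rat" and \<chi> p :: "rat poly" and r :: "nat \<Rightarrow> 'a::field_char_0"
  assumes s: "\<And>n. of_rat (s n) = (\<Sum>j<k. \<gamma> j * r j ^ n)"
    and roots: "{z. poly (map_poly of_rat \<chi>) z = 0} = r ` {..<k}" and "inj_on r {..<k}"
    and "degree \<chi> = k"
    and p: "irreducible p" "poly (map_poly of_rat p) (r i) = 0" "poly (map_poly of_rat p) (r l) = 0"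
    and "i < k" and "l < k" and "\<gamma> l = 0"
  shows "\<gamma> i = 0"
proof -
  define X :: "'a poly" where "X = map_poly of_rat \<chi>"
  define P where "P = diff_quot_poly \<chi> s"
  have X_roots: "poly X (r m) = 0" if "m < k" for m
    using roots that by (auto simp: X_def)
  have "map_poly of_rat P = diff_quot_poly X (\<lambda>n. \<Sum>j<k. \<gamma> j * r j ^ n)"
    using s by (simp add: P_def X_def map_poly_of_rat_diff_quot_poly)
  then have P_at_root: "poly (map_poly of_rat P) (r m) = \<gamma> m * poly (pderiv X) (r m)" if "m < k" for m
    using poly_diff_quot_poly_at_root[of "{..<k}" r X m] \<open>inj_on r {..<k}\<close> X_roots that by simp
  have "X \<noteq> 0" and "card {z. poly X z = 0} = degree X"
    using \<open>i < k\<close> \<open>inj_on r {..<k}\<close> \<open>degree \<chi> = k\<close> by (auto simp: X_def roots card_image)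
  then have "poly (pderiv X) (r i) \<noteq> 0"
    using poly_pderiv_neq_0_if_card_roots_eq_degree X_roots \<open>i < k\<close> by blast
  moreover have "poly (map_poly of_rat P) (r i) = 0"
    using poly_of_rat_eq_0_if_irreducible_common_root[of p "r l" P "r i"] P_at_root p \<open>l < k\<close> \<open>\<gamma> l = 0\<close>
    by simp
  ultimately show ?thesis
    using P_at_root \<open>i < k\<close> by simp
qed

theorem mainTheorem3:
  fixes a :: "nat \<Rightarrow> int" and k :: nat and c :: "nat \<Rightarrow> rat"
    and r :: "nat \<Rightarrow> complex" and \<beta> :: "nat \<Rightarrow> complex"
    and j :: nat and \<chi>s :: "nat \<Rightarrow> rat poly"
  assumes rec: "\<exists>N. \<forall>n\<ge>N. of_int (a (n + k)) = (\<Sum>i<k. c i * of_int (a (n + i)))"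
    and roots: "{z. poly (map_poly of_rat (char_poly k c)) z = 0} = r ` {..<k}"
    and distinct: "inj_on r {..<k}"
    and closed_form: "\<exists>N. \<forall>n\<ge>N. of_int (a n) = (\<Sum>i<k. \<beta> i * r i ^ n)"
    and j_pos: "j \<ge> 1"
    and factor: "char_poly k c = (\<Prod>i<j. \<chi>s i)"
    and irred: "\<forall>i<j. irreducible (\<chi>s i)"
  shows "(\<forall>i<k. poly (map_poly of_rat (\<chi>s 0)) (r i) = 0 \<longrightarrow> \<beta> i = 0)
       \<or> (\<forall>i<k. poly (map_poly of_rat (\<chi>s 0)) (r i) = 0 \<longrightarrow> \<beta> i \<noteq> 0)"
proof (rule ccontr)
  define p where "p = \<chi>s 0"
  assume "\<not> ?thesis"
  then obtain i l where i: "i < k" "poly (map_poly of_rat p) (r i) = 0" "\<beta> i \<noteq> 0"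
    and l: "l < k" "poly (map_poly of_rat p) (r l) = 0" "\<beta> l = 0"
    unfolding p_def by blast
  have "irreducible p"
    using irred j_pos by (simp add: p_def)
  obtain N where N: "\<forall>n\<ge>N. of_int (a n) = (\<Sum>i<k. \<beta> i * r i ^ n)"
    using closed_form by blast
  have tail: "of_rat (of_int (a (N + n))) = (\<Sum>m<k. (\<beta> m * r m ^ N) * r m ^ n)" for n
    using N by (simp add: power_add mult.assoc)
  have "\<beta> i * r i ^ N = 0"
    using power_sum_coeff_eq_0_if_conjugate_coeff_eq_0[where s = "\<lambda>n. of_int (a (N + n))"
        and \<gamma> = "\<lambda>m. \<beta> m * r m ^ N",
        OF tail roots distinct degree_char_poly \<open>irreducible p\<close> i(2) l(2) i(1) l(1)] l(3)
    by simp
  then have "r i = 0"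
    using i by simp
  then have "poly (map_poly of_rat [:0, 1:]) (r l) = 0"
    using poly_of_rat_eq_0_if_irreducible_common_root[of p "r i" "[:0, 1:]" "r l"] \<open>irreducible p\<close> i l
    by simp
  with \<open>r i = 0\<close> have "r l = r i"
    by simp
  then show False
    using distinct i l by (auto dest: inj_onD)
qed

end
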